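(* Every 2-local 1-automorphism of a finite dimensional formally real exceptional simple Jordan algebra $\mathcal{A}$ is an automorphism.
   Context: A real Jordan algebra is formally real if $\sum_i a_i^2=0$ (finite sum) implies each $a_i=0$; $\mathcal{A}$ is unital with identity $1$. Exceptional means not isomorphic to a Jordan subalgebra of $R^+$ (product $\frac12(ab+ba)$) for an associative algebra $R$. A symmetry is $s$ with $s^2=1$, $U_s(x)=2s(sx)-x$. A 2-local 1-automorphism is a map $\Delta$ (not assumed linear) such that for every $x,y$ there is a symmetry $s$ with $\Delta(x)=U_s(x)$, $\Delta(y)=U_s(y)$. *)

theory Defs
  imports "HOL-Analysis.Analysis"
begin

definition jordan_algebra :: "('a::real_vector \<Rightarrow> 'a \<Rightarrow> 'a) \<Rightarrow> bool" where
  "jordan_algebra p \<longleftrightarrow>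
     bilinear p \<and>
     (\<forall>x y. p x y = p y x) \<and>
     (\<forall>x y. p (p x y) (p x x) = p x (p y (p x x)))"

definition jordan_unit :: "('a \<Rightarrow> 'a \<Rightarrow> 'a) \<Rightarrow> 'a \<Rightarrow> bool" where
  "jordan_unit p e \<longleftrightarrow> (\<forall>x. p e x = x \<and> p x e = x)"

definition formally_real :: "('a::real_vector \<Rightarrow> 'a \<Rightarrow> 'a) \<Rightarrow> bool" where
  "formally_real p \<longleftrightarrow>
     (\<forall>xs. sum_list (map (\<lambda>a. p a a) xs) = 0 \<longrightarrow> (\<forall>a\<in>set xs. a = 0))"

definition jordan_ideal :: "('a::real_vector \<Rightarrow> 'a \<Rightarrow> 'a) \<Rightarrow> 'a set \<Rightarrow> bool" where
  "jordan_ideal p I \<longleftrightarrow> subspace I \<and> (\<forall>a x. x \<in> I \<longrightarrow> p a x \<in> I)"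

definition simple_algebra :: "('a::real_vector \<Rightarrow> 'a \<Rightarrow> 'a) \<Rightarrow> bool" where
  "simple_algebra p \<longleftrightarrow>
     (\<exists>x y. p x y \<noteq> 0) \<and>
     (\<forall>I. jordan_ideal p I \<longrightarrow> I = {0} \<or> I = UNIV)"

definition assoc_real_algebra_on ::
  "'r set \<Rightarrow> 'r \<Rightarrow> ('r \<Rightarrow> 'r \<Rightarrow> 'r) \<Rightarrow> (real \<Rightarrow> 'r \<Rightarrow> 'r) \<Rightarrow> ('r \<Rightarrow> 'r \<Rightarrow> 'r) \<Rightarrow> bool" where
  "assoc_real_algebra_on S z add sm mul \<longleftrightarrow>
     z \<in> S \<and>
     (\<forall>a\<in>S. \<forall>b\<in>S. add a b \<in> S) \<and>
     (\<forall>c. \<forall>a\<in>S. sm c a \<in> S) \<and>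
     (\<forall>a\<in>S. \<forall>b\<in>S. mul a b \<in> S) \<and>
     (\<forall>a\<in>S. \<forall>b\<in>S. \<forall>c\<in>S. add (add a b) c = add a (add b c)) \<and>
     (\<forall>a\<in>S. \<forall>b\<in>S. add a b = add b a) \<and>
     (\<forall>a\<in>S. add z a = a) \<and>
     (\<forall>a\<in>S. \<exists>b\<in>S. add a b = z) \<and>
     (\<forall>c d. \<forall>a\<in>S. sm c (sm d a) = sm (c * d) a) \<and>
     (\<forall>a\<in>S. sm 1 a = a) \<and>
     (\<forall>c. \<forall>a\<in>S. \<forall>b\<in>S. sm c (add a b) = add (sm c a) (sm c b)) \<and>
     (\<forall>c d. \<forall>a\<in>S. sm (c + d) a = add (sm c a) (sm d a)) \<and>
     (\<forall>a\<in>S. \<forall>b\<in>S. \<forall>c\<in>S. mul (mul a b) c = mul a (mul b c)) \<and>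
     (\<forall>a\<in>S. \<forall>b\<in>S. \<forall>c\<in>S. mul a (add b c) = add (mul a b) (mul a c)) \<and>
     (\<forall>a\<in>S. \<forall>b\<in>S. \<forall>c\<in>S. mul (add a b) c = add (mul a c) (mul b c)) \<and>
     (\<forall>r. \<forall>a\<in>S. \<forall>b\<in>S. mul (sm r a) b = sm r (mul a b) \<and> mul a (sm r b) = sm r (mul a b))"

text \<open>\<open>p\<close> is special w.r.t. carriers in type \<open>'r\<close>: there is an associative real
algebra \<open>R\<close> (on a carrier in \<open>'r\<close>) and an injective linear map into \<open>R\<close> turning
\<open>p\<close> into the Jordan product \<open>(ab+ba)/2\<close>, i.e. \<open>A\<close> is isomorphic to a Jordan
subalgebra of \<open>R\<^sup>+\<close>.\<close>
definition special_in ::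
  "'r itself \<Rightarrow> ('a::real_vector \<Rightarrow> 'a \<Rightarrow> 'a) \<Rightarrow> bool" where
  "special_in _ p \<longleftrightarrow>
     (\<exists>(S::'r set) z add sm mul f.
        assoc_real_algebra_on S z add sm mul \<and>
        (\<forall>x. f x \<in> S) \<and> inj f \<and>
        (\<forall>x y. f (x + y) = add (f x) (f y)) \<and>
        (\<forall>c x. f (c *\<^sub>R x) = sm c (f x)) \<and>
        (\<forall>x y. f (p x y) = sm (1/2) (add (mul (f x) (f y)) (mul (f y) (f x)))))"

text \<open>The ambient carrier type is \<open>real\<close>, which has the
cardinality of the continuum; this is no restriction for finite-dimensional
\<open>A\<close>, since the subalgebra generated by the image of \<open>A\<close> in any associative
algebra has countable dimension, hence cardinality at most continuum.\<close>
definition exceptional :: "('a::real_vector \<Rightarrow> 'a \<Rightarrow> 'a) \<Rightarrow> bool" where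
  "exceptional p \<longleftrightarrow> \<not> special_in TYPE(real) p"

definition symmetry :: "('a \<Rightarrow> 'a \<Rightarrow> 'a) \<Rightarrow> 'a \<Rightarrow> 'a \<Rightarrow> bool" where
  "symmetry p e s \<longleftrightarrow> p s s = e"

definition U_op :: "('a::real_vector \<Rightarrow> 'a \<Rightarrow> 'a) \<Rightarrow> 'a \<Rightarrow> 'a \<Rightarrow> 'a" where
  "U_op p s x = 2 *\<^sub>R p s (p s x) - x"

definition two_local_1_automorphism ::
  "('a::real_vector \<Rightarrow> 'a \<Rightarrow> 'a) \<Rightarrow> 'a \<Rightarrow> ('a \<Rightarrow> 'a) \<Rightarrow> bool" where
  "two_local_1_automorphism p e \<Delta> \<longleftrightarrow>
     (\<forall>x y. \<exists>s. symmetry p e s \<and> \<Delta> x = U_op p s x \<and> \<Delta> y = U_op p s y)"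

definition jordan_automorphism :: "('a::real_vector \<Rightarrow> 'a \<Rightarrow> 'a) \<Rightarrow> ('a \<Rightarrow> 'a) \<Rightarrow> bool" where
  "jordan_automorphism p \<Phi> \<longleftrightarrow>
     linear \<Phi> \<and> bij \<Phi> \<and> (\<forall>x y. \<Phi> (p x y) = p (\<Phi> x) (\<Phi> y))"

end

theory Submission
  imports Defs "HOL-Computational_Algebra.Fundamental_Theorem_Algebra"
begin

text \<open>For a symmetry \<open>s\<close>, \<open>U_op p s\<close> is an involutive automorphism (linearized Jordan identity).
  Conjugation by it carries the multiplication operator \<open>L\<^sub>z\<close> to \<open>L\<^bsub>U z\<^esub>\<close>, so the trace
  form \<open>(u, v) \<mapsto> tr L\<^bsub>u v\<^esub>\<close> is invariant under every \<open>U_op p s\<close>. In a finite-dimensional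
  formally real Jordan algebra this form is positive definite: formal reality forces the minimal
  polynomial of \<open>x\<close> to split over the reals with simple roots, so \<open>x = \<Sum> \<lambda>\<^sub>i e\<^sub>i\<close> and
  \<open>x\<^sup>2 = \<Sum> \<lambda>\<^sub>i\<^sup>2 e\<^sub>i\<close> with idempotents \<open>e\<^sub>i\<close>, and \<open>tr L\<^sub>e > 0\<close> for an idempotent \<open>e \<noteq> 0\<close>
  because \<open>L\<^sub>e\<close> is a positive combination of Peirce projections.
  A 2-local 1-automorphism \<open>\<Delta>\<close> agrees on any two elements with one \<open>U_op p s\<close>, hence preserves
  the trace form, which by positive definiteness makes it linear and injective; it preserves
  squares, hence products by polarization.\<close>

lemma double_zero_real_vector [simp]: "x + x = 0 \<longleftrightarrow> (x::'a::real_vector) = 0"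
  by (metis scaleR_2 scaleR_eq_0_iff zero_neq_numeral)

section \<open>Linearized Jordan identity and symmetries\<close>

locale real_jordan_algebra =
  fixes p :: "'a::real_vector \<Rightarrow> 'a \<Rightarrow> 'a" (infixl \<open>\<odot>\<close> 70)
  assumes jordan_algebra: "jordan_algebra p"
begin

lemma bilinear: "bilinear p"
  and commute: "x \<odot> y = y \<odot> x"
  and jordan_identity: "(x \<odot> y) \<odot> (x \<odot> x) = x \<odot> (y \<odot> (x \<odot> x))"
  using jordan_algebra unfolding jordan_algebra_def by blast+

lemmas mult_simps [simp] =
  bilinear_ladd[OF bilinear] bilinear_radd[OF bilinear]
  bilinear_lmul[OF bilinear] bilinear_rmul[OF bilinear]
  bilinear_lneg[OF bilinear] bilinear_rneg[OF bilinear]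
  bilinear_lsub[OF bilinear] bilinear_rsub[OF bilinear]
  bilinear_lzero[OF bilinear] bilinear_rzero[OF bilinear]

lemma linear_mult_left: "linear ((\<odot>) x)"
  using bilinear unfolding bilinear_def by blast

lemma mult_sum_left: "sum f S \<odot> y = (\<Sum>i\<in>S. f i \<odot> y)"
  by (induction S rule: infinite_finite_induct) simp_all

lemma mult_sum_right: "y \<odot> sum f S = (\<Sum>i\<in>S. y \<odot> f i)"
  by (induction S rule: infinite_finite_induct) simp_all

lemma jordan_identity_partial_linearization:
  "(z \<odot> y) \<odot> (x \<odot> x) + (x \<odot> y) \<odot> (x \<odot> z) + (x \<odot> y) \<odot> (x \<odot> z)
     = z \<odot> (y \<odot> (x \<odot> x)) + x \<odot> (y \<odot> (x \<odot> z)) + x \<odot> (y \<odot> (x \<odot> z))"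
proof -
  define J where "J x = (x \<odot> y) \<odot> (x \<odot> x) - x \<odot> (y \<odot> (x \<odot> x))" for x
  define D where "D = (z \<odot> y) \<odot> (x \<odot> x) + (x \<odot> y) \<odot> (x \<odot> z) + (x \<odot> y) \<odot> (x \<odot> z)
     - (z \<odot> (y \<odot> (x \<odot> x)) + x \<odot> (y \<odot> (x \<odot> z)) + x \<odot> (y \<odot> (x \<odot> z)))"
  \<comment> \<open>\<open>D + J z\<close> is the part of \<open>J (x + z)\<close> of odd degree in \<open>z\<close>\<close>
  have "D + D = J (x + z) - J (x - z) - J z - J z"
    unfolding J_def D_def by (simp add: algebra_simps commute)
  also have "\<dots> = 0"
    using jordan_identity by (simp only: J_def diff_self diff_zero)
  finally have "D = 0"
    by simp
  then show ?thesis
    by (simp add: D_def)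
qed

lemma jordan_identity_linearization:
  "(z \<odot> y) \<odot> (x \<odot> w) + (w \<odot> y) \<odot> (x \<odot> z) + (x \<odot> y) \<odot> (w \<odot> z)
     = z \<odot> (y \<odot> (x \<odot> w)) + w \<odot> (y \<odot> (x \<odot> z)) + x \<odot> (y \<odot> (w \<odot> z))"
proof -
  define J where "J x = (z \<odot> y) \<odot> (x \<odot> x) + (x \<odot> y) \<odot> (x \<odot> z) + (x \<odot> y) \<odot> (x \<odot> z)
     - (z \<odot> (y \<odot> (x \<odot> x)) + x \<odot> (y \<odot> (x \<odot> z)) + x \<odot> (y \<odot> (x \<odot> z)))" for x
  define D where "D = (z \<odot> y) \<odot> (x \<odot> w) + (w \<odot> y) \<odot> (x \<odot> z) + (x \<odot> y) \<odot> (w \<odot> z)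
     - (z \<odot> (y \<odot> (x \<odot> w)) + w \<odot> (y \<odot> (x \<odot> z)) + x \<odot> (y \<odot> (w \<odot> z)))"
  \<comment> \<open>\<open>J\<close> is quadratic, and \<open>D\<close> is its polarization at \<open>x\<close> and \<open>w\<close>\<close>
  have "(D + D) + (D + D) = J (x + w) - J (x - w)"
    unfolding J_def D_def by (simp add: algebra_simps commute)
  also have "\<dots> = 0"
    using jordan_identity_partial_linearization by (simp only: J_def diff_self diff_zero)
  finally have "D = 0"
    by simp
  then show ?thesis
    by (simp add: D_def)
qed

lemma linear_U_op: "linear (U_op p s)"
  by (rule linearI) (simp_all add: U_op_def algebra_simps)

end

locale unital_jordan_algebra = real_jordan_algebra +
  fixes e :: "'a::real_vector"
  assumes unit: "jordan_unit p e"
begin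

lemma unit_left [simp]: "e \<odot> x = x"
  and unit_right [simp]: "x \<odot> e = x"
  using unit unfolding jordan_unit_def by blast+

context
  fixes s
  assumes symmetry: "s \<odot> s = e"
begin

lemma symmetry_mult_mult:
  "(s \<odot> y) \<odot> (s \<odot> w) = s \<odot> (y \<odot> (s \<odot> w))"
proof -
  have "(s \<odot> y) \<odot> (s \<odot> w) + (w \<odot> y) \<odot> (s \<odot> s) + (s \<odot> y) \<odot> (w \<odot> s)
      = s \<odot> (y \<odot> (s \<odot> w)) + w \<odot> (y \<odot> (s \<odot> s)) + s \<odot> (y \<odot> (w \<odot> s))"
    by (rule jordan_identity_linearization)
  then have "(s \<odot> y) \<odot> (s \<odot> w) - s \<odot> (y \<odot> (s \<odot> w))
      + ((s \<odot> y) \<odot> (s \<odot> w) - s \<odot> (y \<odot> (s \<odot> w))) = 0"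
    by (simp add: symmetry commute[of w s] commute[of w y] algebra_simps)
  then show ?thesis
    by simp
qed

lemma symmetry_mult_cube: "s \<odot> (s \<odot> (s \<odot> w)) = s \<odot> w"
  using symmetry_mult_mult[of s w] by (simp add: symmetry)

lemma symmetry_linearized_identity:
  "(s \<odot> z) \<odot> (s \<odot> w) + (s \<odot> z) \<odot> (s \<odot> w) + w \<odot> z
     = z \<odot> (s \<odot> (s \<odot> w)) + w \<odot> (s \<odot> (s \<odot> z)) + s \<odot> (s \<odot> (w \<odot> z))"
  using jordan_identity_linearization[of z s s w]
  by (simp add: symmetry commute[of z s] commute[of w s] commute[of "s \<odot> w" "s \<odot> z"])

lemma symmetry_mult_square_mult:
  "(s \<odot> (s \<odot> x)) \<odot> (s \<odot> (s \<odot> y)) = (s \<odot> x) \<odot> (s \<odot> y)"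
proof -
  have "s \<odot> (s \<odot> ((s \<odot> y) \<odot> (s \<odot> x))) = (s \<odot> x) \<odot> (s \<odot> y)"
    by (simp add: commute[of "s \<odot> y" "s \<odot> x"] symmetry_mult_mult[of x y] symmetry_mult_cube)
  with symmetry_linearized_identity[of "s \<odot> x" "s \<odot> y"]
  have "(s \<odot> (s \<odot> x)) \<odot> (s \<odot> (s \<odot> y)) - (s \<odot> x) \<odot> (s \<odot> y)
      + ((s \<odot> (s \<odot> x)) \<odot> (s \<odot> (s \<odot> y)) - (s \<odot> x) \<odot> (s \<odot> y)) = 0"
    by (simp add: symmetry_mult_cube commute[of "s \<odot> y" "s \<odot> x"] algebra_simps)
  then show ?thesis
    by simp
qed

lemma U_op_mult: "U_op p s (x \<odot> y) = U_op p s x \<odot> U_op p s y"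
proof -
  define D where "D = s \<odot> (s \<odot> (x \<odot> y)) + x \<odot> (s \<odot> (s \<odot> y)) + (s \<odot> (s \<odot> x)) \<odot> y
    - (x \<odot> y + (s \<odot> x) \<odot> (s \<odot> y) + (s \<odot> x) \<odot> (s \<odot> y))"
  have "D = 0"
    using symmetry_linearized_identity[of x y]
    by (simp add: D_def commute[of y x] commute[of y "s \<odot> (s \<odot> x)"] algebra_simps)
  moreover have "U_op p s (x \<odot> y) - U_op p s x \<odot> U_op p s y = D + D"
    unfolding U_op_def D_def using symmetry_mult_square_mult[of x y]
    by (simp add: algebra_simps scaleR_2)
  ultimately show ?thesis
    by simp
qed

lemma U_op_involutive: "U_op p s (U_op p s x) = x"
  unfolding U_op_def by (simp add: symmetry_mult_cube algebra_simps scaleR_2)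

end

end

section \<open>Power-associativity and evaluation of real polynomials\<close>

context real_jordan_algebra
begin

lemma mult_square_operator:
  "(y \<odot> (x \<odot> x)) \<odot> w = (x \<odot> y) \<odot> (x \<odot> w) + (x \<odot> y) \<odot> (x \<odot> w) + (x \<odot> x) \<odot> (y \<odot> w)
     - x \<odot> (y \<odot> (x \<odot> w)) - x \<odot> (y \<odot> (x \<odot> w))"
  using jordan_identity_linearization[of x y x w]
  by (simp add: commute[of w x] commute[of w y] commute[of w "y \<odot> (x \<odot> x)"]
      commute[of "y \<odot> w" "x \<odot> x"] algebra_simps)

lemma mult_left_commute_square: "x \<odot> ((x \<odot> x) \<odot> w) = (x \<odot> x) \<odot> (x \<odot> w)"
  using jordan_identity[of x w]
  by (simp add: commute[of w x] commute[of w "x \<odot> x"] commute[of "x \<odot> w" "x \<odot> x"])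

end

context unital_jordan_algebra
begin

primrec jpow :: "'a \<Rightarrow> nat \<Rightarrow> 'a" where
  "jpow x 0 = e"
| "jpow x (Suc n) = x \<odot> jpow x n"

lemma jpow_Suc_Suc: "(x \<odot> x) \<odot> jpow x n = jpow x (Suc (Suc n))"
  by (induction n) (simp_all add: mult_left_commute_square[symmetric])

text \<open>Expressing the multiplication by \<open>jpow x (n + 2) = jpow x n \<odot> (x \<odot> x)\<close> through
  \<open>mult_square_operator\<close> reduces the claim to the two preceding powers.\<close>
lemma jpow_mult_commute: "jpow x n \<odot> (x \<odot> w) = x \<odot> (jpow x n \<odot> w)"
proof (induction n arbitrary: w rule: induct_nat_012)
  case 0
  then show ?case
    by simp
next
  case 1
  then show ?case
    by simp
next
  case (ge2 n)
  have expand: "jpow x (Suc (Suc n)) \<odot> w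
      = jpow x (Suc n) \<odot> (x \<odot> w) + jpow x (Suc n) \<odot> (x \<odot> w) + (x \<odot> x) \<odot> (jpow x n \<odot> w)
        - x \<odot> (jpow x n \<odot> (x \<odot> w)) - x \<odot> (jpow x n \<odot> (x \<odot> w))" for w
  proof -
    have "jpow x (Suc (Suc n)) = jpow x n \<odot> (x \<odot> x)"
      using jpow_Suc_Suc[of x n] commute by metis
    then show ?thesis
      by (simp only: mult_square_operator) simp
  qed
  show ?case
    unfolding expand by (simp add: ge2.IH mult_left_commute_square del: jpow.simps(2))
qed

lemma jpow_add: "jpow x m \<odot> jpow x n = jpow x (m + n)"
  by (induction n) (simp_all add: jpow_mult_commute)

definition peval :: "'a \<Rightarrow> real poly \<Rightarrow> 'a" where
  "peval x q = (\<Sum>i\<le>degree q. coeff q i *\<^sub>R jpow x i)"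

lemma peval_eq_sum_atMost: "degree q \<le> N \<Longrightarrow> peval x q = (\<Sum>i\<le>N. coeff q i *\<^sub>R jpow x i)"
  unfolding peval_def by (rule sum.mono_neutral_left) (auto simp: coeff_eq_0)

lemma peval_0 [simp]: "peval x 0 = 0"
  by (simp add: peval_def)

lemma peval_X: "peval x [:0, 1:] = x"
  by (simp add: peval_def)

lemma peval_add: "peval x (q + r) = peval x q + peval x r"
proof -
  have "degree (q + r) \<le> max (degree q) (degree r)"
    by (rule degree_add_le) auto
  then show ?thesis
    by (simp add: peval_eq_sum_atMost[of _ "max (degree q) (degree r)"] scaleR_add_left sum.distrib)
qed

lemma peval_smult: "peval x (smult c q) = c *\<^sub>R peval x q"
  by (simp add: peval_eq_sum_atMost[of _ "degree q"] scaleR_sum_right)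

lemma peval_diff: "peval x (q - r) = peval x q - peval x r"
  using peval_add[of x q "- r"] peval_smult[of x "-1" r] by simp

lemma peval_sum: "peval x (\<Sum>i\<in>S. f i) = (\<Sum>i\<in>S. peval x (f i))"
  by (induction S rule: infinite_finite_induct) (simp_all add: peval_add)

lemma peval_monom: "peval x (monom c k) = c *\<^sub>R jpow x k"
proof -
  have "peval x (monom c k) = (\<Sum>i\<le>k. coeff (monom c k) i *\<^sub>R jpow x i)"
    by (rule peval_eq_sum_atMost) (rule degree_monom_le)
  also have "\<dots> = (\<Sum>i\<le>k. if i = k then c *\<^sub>R jpow x k else 0)"
    by (rule sum.cong) (auto simp: coeff_monom)
  also have "\<dots> = c *\<^sub>R jpow x k"
    by simp
  finally show ?thesis .
qed

lemma peval_mult: "peval x (q * r) = peval x q \<odot> peval x r"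
proof -
  have "q * r = (\<Sum>i\<le>degree q. \<Sum>j\<le>degree r. monom (coeff q i * coeff r j) (i + j))"
    by (subst poly_as_sum_of_monoms[symmetric, of q], subst poly_as_sum_of_monoms[symmetric, of r])
      (simp add: sum_product mult_monom)
  then have "peval x (q * r)
      = (\<Sum>i\<le>degree q. \<Sum>j\<le>degree r. (coeff q i * coeff r j) *\<^sub>R jpow x (i + j))"
    by (simp add: peval_sum peval_monom)
  also have "\<dots> = peval x q \<odot> peval x r"
    unfolding peval_def mult_sum_left mult_sum_right
    by (subst sum.swap) (simp add: jpow_add mult.commute add.commute)
  finally show ?thesis .
qed

end

section \<open>Trace of a linear operator\<close>

definition lin_trace :: "('a::euclidean_space \<Rightarrow> 'a) \<Rightarrow> real" where
  "lin_trace f = (\<Sum>b\<in>Basis. f b \<bullet> b)"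

lemma lin_trace_add: "lin_trace (\<lambda>x. f x + g x) = lin_trace f + lin_trace g"
  by (simp add: lin_trace_def inner_add_left sum.distrib)

lemma lin_trace_scale: "lin_trace (\<lambda>x. c *\<^sub>R f x) = c * lin_trace f"
  by (simp add: lin_trace_def sum_distrib_left)

lemma lin_trace_comp_commute:
  assumes "linear f" "linear g"
  shows "lin_trace (\<lambda>x. f (g x)) = lin_trace (\<lambda>x. g (f x))"
proof -
  have "lin_trace (\<lambda>x. f (g x)) = (\<Sum>b\<in>Basis. \<Sum>c\<in>Basis. (g b \<bullet> c) * (f c \<bullet> b))"
    unfolding lin_trace_def by (subst Linear_Algebra.linear_componentwise[OF assms(1)]) simp
  also have "\<dots> = (\<Sum>c\<in>Basis. \<Sum>b\<in>Basis. (f c \<bullet> b) * (g b \<bullet> c))"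
    by (subst sum.swap) (simp add: mult.commute)
  also have "\<dots> = lin_trace (\<lambda>x. g (f x))"
    unfolding lin_trace_def by (subst (2) Linear_Algebra.linear_componentwise[OF assms(2)]) simp
  finally show ?thesis .
qed

definition orthonormal_projection :: "'a::euclidean_space set \<Rightarrow> 'a \<Rightarrow> 'a" where
  "orthonormal_projection B x = (\<Sum>u\<in>B. (x \<bullet> u) *\<^sub>R u)"

lemma linear_orthonormal_projection: "linear (orthonormal_projection B)"
  unfolding orthonormal_projection_def
  by (rule linearI) (simp_all add: inner_add_left scaleR_add_left sum.distrib scaleR_sum_right)

lemma orthonormal_projection_in_span: "orthonormal_projection B x \<in> span B"
  unfolding orthonormal_projection_def by (intro span_sum span_scale span_base)

context
  fixes B :: "'a::euclidean_space set"
  assumes finite: "finite B"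
    and orthogonal: "pairwise orthogonal B"
    and unit_norm: "\<And>u. u \<in> B \<Longrightarrow> norm u = 1"
begin

lemma inner_orthonormal_projection:
  assumes "u \<in> B"
  shows "orthonormal_projection B x \<bullet> u = x \<bullet> u"
proof -
  have "v \<bullet> u = (if v = u then 1 else 0)" if "v \<in> B" for v
    using orthogonal unit_norm[OF assms] that assms
    by (auto simp: pairwise_def orthogonal_def dot_square_norm)
  then have "orthonormal_projection B x \<bullet> u = (\<Sum>v\<in>B. if v = u then x \<bullet> u else 0)"
    unfolding orthonormal_projection_def inner_sum_left by (intro sum.cong) auto
  then show ?thesis
    using finite assms by simp
qed

lemma orthonormal_projection_span:
  assumes "y \<in> span B"
  shows "orthonormal_projection B y = y"
proof -
  let ?d = "y - orthonormal_projection B y"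
  have "orthogonal ?d a" if "a \<in> span B" for a
    by (rule orthogonal_to_span[OF that])
      (simp add: orthogonal_def inner_diff_left inner_orthonormal_projection)
  moreover have "?d \<in> span B"
    by (rule span_diff[OF assms orthonormal_projection_in_span])
  ultimately have "?d \<bullet> ?d = 0"
    by (simp add: orthogonal_def)
  then show ?thesis
    by simp
qed

lemma lin_trace_orthonormal_projection: "lin_trace (orthonormal_projection B) = card B"
proof -
  have "lin_trace (orthonormal_projection B) = (\<Sum>u\<in>B. \<Sum>b\<in>Basis. (b \<bullet> u) * (u \<bullet> b))"
    unfolding lin_trace_def orthonormal_projection_def inner_sum_left by (subst sum.swap) simp
  also have "\<dots> = (\<Sum>u\<in>B. u \<bullet> u)"
    by (subst (2) euclidean_inner) (simp add: inner_commute)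
  also have "\<dots> = card B"
    using unit_norm by (simp add: dot_square_norm)
  finally show ?thesis .
qed

end

text \<open>The range of an idempotent is fixed pointwise, so the idempotent agrees with the orthogonal
  projection onto its range up to cyclic permutation inside the trace.\<close>
lemma lin_trace_idempotent:
  fixes P :: "'a::euclidean_space \<Rightarrow> 'a"
  assumes "linear P" and idem: "\<And>x. P (P x) = P x"
  shows "lin_trace P = dim (range P)"
proof -
  obtain B where "pairwise orthogonal B" and unit_norm: "\<And>u. u \<in> B \<Longrightarrow> norm u = 1"
    and "independent B" and card: "card B = dim (range P)" and span: "span B = range P"
    using orthonormal_basis_subspace[OF linear_subspace_image[OF assms(1) subspace_UNIV]] by metis
  then have "finite B"
    using independent_imp_finite by blast
  let ?Q = "orthonormal_projection B"
  have QP: "?Q (P x) = P x" for x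
    using orthonormal_projection_span[OF \<open>finite B\<close> \<open>pairwise orthogonal B\<close> unit_norm] span
    by blast
  have PQ: "P (?Q x) = ?Q x" for x
    using orthonormal_projection_in_span[of B x] span idem by auto
  have "lin_trace P = lin_trace (\<lambda>x. ?Q (P x))"
    by (simp only: QP)
  also have "\<dots> = lin_trace (\<lambda>x. P (?Q x))"
    by (rule lin_trace_comp_commute[OF linear_orthonormal_projection assms(1)])
  also have "\<dots> = lin_trace ?Q"
    by (simp only: PQ)
  also have "\<dots> = dim (range P)"
    using lin_trace_orthonormal_projection[OF \<open>finite B\<close> \<open>pairwise orthogonal B\<close> unit_norm] card
    by simp
  finally show ?thesis .
qed

section \<open>The trace form\<close>

locale finite_dim_jordan_algebra =
  unital_jordan_algebra p e for p :: "'a::euclidean_space \<Rightarrow> 'a \<Rightarrow> 'a" (infixl \<open>\<odot>\<close> 70) and e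
begin

definition tau :: "'a \<Rightarrow> real" where
  "tau z = lin_trace ((\<odot>) z)"

lemma tau_add: "tau (x + y) = tau x + tau y"
proof -
  have "(\<odot>) (x + y) = (\<lambda>w. x \<odot> w + y \<odot> w)"
    by (simp add: fun_eq_iff)
  then show ?thesis
    by (simp add: tau_def lin_trace_add)
qed

lemma tau_scale: "tau (c *\<^sub>R x) = c * tau x"
proof -
  have "(\<odot>) (c *\<^sub>R x) = (\<lambda>w. c *\<^sub>R (x \<odot> w))"
    by (simp add: fun_eq_iff)
  then show ?thesis
    by (simp add: tau_def lin_trace_scale)
qed

lemma tau_zero: "tau 0 = 0"
  using tau_scale[of 0 0] by simp

lemma tau_diff: "tau (x - y) = tau x - tau y"
  using tau_add[of x "(-1) *\<^sub>R y"] tau_scale[of "-1" y] by simp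

lemma tau_sum: "tau (\<Sum>i\<in>S. f i) = (\<Sum>i\<in>S. tau (f i))"
  by (induction S rule: infinite_finite_induct) (simp_all add: tau_zero tau_add)

text \<open>\<open>U_op p s\<close> is an involutive automorphism, so it conjugates the multiplication by \<open>z\<close> into
  the multiplication by \<open>U_op p s z\<close>.\<close>
lemma tau_U_op:
  assumes "s \<odot> s = e"
  shows "tau (U_op p s z) = tau z"
proof -
  let ?U = "U_op p s"
  have "(\<odot>) (?U z) = (\<lambda>w. ?U (z \<odot> ?U w))"
    using assms by (simp add: U_op_mult U_op_involutive)
  then have "tau (?U z) = lin_trace (\<lambda>w. ?U (z \<odot> ?U w))"
    by (simp add: tau_def)
  also have "\<dots> = lin_trace (\<lambda>w. z \<odot> ?U (?U w))"
    by (rule lin_trace_comp_commute)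
      (use linear_compose[OF linear_U_op linear_mult_left] in \<open>simp_all add: o_def linear_U_op\<close>)
  also have "\<dots> = tau z"
    using assms by (simp add: tau_def U_op_involutive)
  finally show ?thesis .
qed

lemma mult_idempotent_cube:
  assumes "f \<odot> f = f"
  shows "f \<odot> (f \<odot> (f \<odot> w)) = (3/2) *\<^sub>R (f \<odot> (f \<odot> w)) - (1/2) *\<^sub>R (f \<odot> w)"
proof (rule euclidean_eqI)
  fix b :: 'a
  have "f \<odot> w + f \<odot> (f \<odot> (f \<odot> w)) + f \<odot> (f \<odot> (f \<odot> w))
      = f \<odot> (f \<odot> w) + f \<odot> (f \<odot> w) + f \<odot> (f \<odot> w)"
    using mult_square_operator[of f f w] by (simp add: assms algebra_simps)
  then have "(f \<odot> w + f \<odot> (f \<odot> (f \<odot> w)) + f \<odot> (f \<odot> (f \<odot> w))) \<bullet> b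
      = (f \<odot> (f \<odot> w) + f \<odot> (f \<odot> w) + f \<odot> (f \<odot> w)) \<bullet> b"
    by simp
  then show "(f \<odot> (f \<odot> (f \<odot> w))) \<bullet> b
      = ((3/2) *\<^sub>R (f \<odot> (f \<odot> w)) - (1/2) *\<^sub>R (f \<odot> w)) \<bullet> b"
    by (simp add: inner_add_left inner_diff_left)
qed

text \<open>For an idempotent \<open>f\<close>, the multiplication by \<open>f\<close> is \<open>P\<^sub>1 + P\<^sub>2 / 2\<close> with the Peirce
  projections \<open>P\<^sub>1\<close>, \<open>P\<^sub>2\<close>; the trace of a projection is the dimension of its range, and
  \<open>f\<close> lies in the range of \<open>P\<^sub>1\<close>.\<close>
lemma tau_idempotent:
  assumes idem: "f \<odot> f = f"
  shows "tau f \<ge> 0" and "f \<noteq> 0 \<Longrightarrow> tau f > 0"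
proof -
  define P1 where "P1 w = 2 *\<^sub>R (f \<odot> (f \<odot> w)) - f \<odot> w" for w
  define P2 where "P2 w = 4 *\<^sub>R (f \<odot> w) - 4 *\<^sub>R (f \<odot> (f \<odot> w))" for w
  have "linear P1" "linear P2"
    unfolding P1_def P2_def by (rule linearI; simp add: algebra_simps)+
  moreover have "P1 (P1 w) = P1 w" "P2 (P2 w) = P2 w" for w
    unfolding P1_def P2_def
    by (simp_all add: mult_idempotent_cube[OF idem])
      (rule euclidean_eqI, simp add: inner_add_left inner_diff_left algebra_simps)+
  ultimately have tr1: "lin_trace P1 = dim (range P1)" and tr2: "lin_trace P2 = dim (range P2)"
    using lin_trace_idempotent by blast+
  have "(\<odot>) f = (\<lambda>w. P1 w + (1/2) *\<^sub>R P2 w)"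
    by (simp add: fun_eq_iff P1_def P2_def algebra_simps scaleR_2)
  then have tau_f: "tau f = lin_trace P1 + (1/2) * lin_trace P2"
    by (simp add: tau_def lin_trace_add lin_trace_scale)
  then show "tau f \<ge> 0"
    using tr1 tr2 by simp
  assume "f \<noteq> 0"
  moreover have "P1 f = f"
    by (simp add: P1_def idem scaleR_2)
  ultimately have "\<not> range P1 \<subseteq> {0}"
    by (metis rangeI singletonD subsetD)
  then have "lin_trace P1 > 0"
    using tr1 dim_eq_0 by fastforce
  then show "tau f > 0"
    using tau_f tr2 by simp
qed

definition trace_form :: "'a \<Rightarrow> 'a \<Rightarrow> real" where
  "trace_form u v = tau (u \<odot> v)"

lemma trace_form_commute: "trace_form u v = trace_form v u"
  by (simp add: trace_form_def commute)

lemma trace_form_add_left: "trace_form (u + v) w = trace_form u w + trace_form v w"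
  and trace_form_add_right: "trace_form w (u + v) = trace_form w u + trace_form w v"
  and trace_form_diff_left: "trace_form (u - v) w = trace_form u w - trace_form v w"
  and trace_form_diff_right: "trace_form w (u - v) = trace_form w u - trace_form w v"
  and trace_form_scale_left: "trace_form (c *\<^sub>R u) w = c * trace_form u w"
  and trace_form_scale_right: "trace_form w (c *\<^sub>R u) = c * trace_form w u"
  by (simp_all add: trace_form_def tau_add tau_diff tau_scale)

lemmas trace_form_simps =
  trace_form_add_left trace_form_add_right trace_form_diff_left trace_form_diff_right
  trace_form_scale_left trace_form_scale_right

end

section \<open>Real polynomials\<close>

lemma map_poly_of_real_add:
  "map_poly (of_real :: real \<Rightarrow> complex) (q + r) = map_poly of_real q + map_poly of_real r"
  by (rule poly_eqI) (simp add: coeff_map_poly)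

lemma map_poly_of_real_mult:
  "map_poly (of_real :: real \<Rightarrow> complex) (q * r) = map_poly of_real q * map_poly of_real r"
  by (rule poly_eqI) (simp add: coeff_map_poly coeff_mult)

lemma poly_map_poly_of_real:
  "poly (map_poly (of_real :: real \<Rightarrow> complex) q) (of_real x) = of_real (poly q x)"
  by (induction q) (auto simp: map_poly_pCons)

lemma prod_linear_factors_dvd:
  fixes q :: "real poly"
  assumes "finite L" "\<And>x. x \<in> L \<Longrightarrow> poly q x = 0"
  shows "(\<Prod>x\<in>L. [:-x, 1:]) dvd q"
  using assms
proof (induction L arbitrary: q rule: finite_induct)
  case empty
  then show ?case
    by simp
next
  case (insert y L)
  obtain r where q: "q = [:-y, 1:] * r"
    using insert.prems poly_eq_0_iff_dvd by (metis dvdE insertI1)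
  have "poly r x = 0" if "x \<in> L" for x
    using insert.prems[of x] insert.hyps(2) that q by auto
  then have "(\<Prod>x\<in>L. [:-x, 1:]) dvd r"
    by (rule insert.IH)
  then show ?case
    unfolding prod.insert[OF insert.hyps] q by (rule mult_dvd_mono[OF dvd_refl])
qed

text \<open>The quadratic is \<open>(X - Re z)\<^sup>2 + (Im z)\<^sup>2\<close>; the remainder of \<open>q\<close> modulo it is linear
  and vanishes at the non-real \<open>z\<close>, hence is zero.\<close>
lemma nonreal_root_quadratic_dvd:
  fixes q :: "real poly"
  assumes root: "poly (map_poly of_real q) z = 0" and nonreal: "Im z \<noteq> 0"
  shows "[:Re z * Re z + Im z * Im z, - 2 * Re z, 1:] dvd q"
proof -
  define g where "g = [:Re z * Re z + Im z * Im z, - 2 * Re z, 1:]"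
  define r where "r = q mod g"
  have g_root: "poly (map_poly of_real g) z = 0"
    unfolding g_def by (simp add: map_poly_pCons complex_eq_iff algebra_simps power2_eq_square)
  define k where "k = q div g"
  have "q = g * k + r"
    by (simp add: r_def k_def)
  then have "poly (map_poly of_real q) z
      = poly (map_poly of_real g) z * poly (map_poly of_real k) z + poly (map_poly of_real r) z"
    by (simp only: map_poly_of_real_add map_poly_of_real_mult poly_add poly_mult)
  then have r_root: "poly (map_poly of_real r) z = 0"
    using root g_root by simp
  have "degree r \<le> 1"
    using degree_mod_less[of g q] by (cases "r = 0") (auto simp: r_def g_def)
  then have r: "r = [:coeff r 0, coeff r 1:]"
    by (intro poly_eqI) (auto simp: coeff_pCons coeff_eq_0 split: nat.split)
  have "coeff r 0 + Re z * coeff r 1 = 0" "Im z * coeff r 1 = 0"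
    using r_root by (subst (asm) r, simp add: map_poly_pCons complex_eq_iff)+
  then have "r = 0"
    using nonreal by (subst r) simp
  then show ?thesis
    by (simp add: r_def g_def mod_eq_0_iff_dvd)
qed

definition lagrange_basis :: "real set \<Rightarrow> real \<Rightarrow> real poly" where
  "lagrange_basis L a = smult (inverse (\<Prod>b\<in>L - {a}. a - b)) (\<Prod>b\<in>L - {a}. [:-b, 1:])"

lemma poly_lagrange_basis:
  assumes "finite L" "a \<in> L" "t \<in> L"
  shows "poly (lagrange_basis L a) t = (if t = a then 1 else 0)"
proof -
  have "poly (lagrange_basis L a) t = inverse (\<Prod>b\<in>L - {a}. a - b) * (\<Prod>b\<in>L - {a}. t - b)"
    by (simp add: lagrange_basis_def poly_prod)
  moreover have "(\<Prod>b\<in>L - {a}. a - b) \<noteq> 0"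
    using assms(1) by simp
  moreover have "(\<Prod>b\<in>L - {a}. t - b) = 0" if "t \<noteq> a"
    using assms that by (simp add: prod_zero_iff)
  ultimately show ?thesis
    by auto
qed

lemma sum_lagrange_basis:
  assumes "finite L" "t \<in> L"
  shows "(\<Sum>a\<in>L. g a * poly (lagrange_basis L a) t) = g t"
proof -
  have "(\<Sum>a\<in>L. g a * poly (lagrange_basis L a) t) = (\<Sum>a\<in>L. if a = t then g t else 0)"
    by (rule sum.cong) (auto simp: poly_lagrange_basis assms)
  also have "\<dots> = g t"
    using assms by simp
  finally show ?thesis .
qed

section \<open>Spectral decomposition in a formally real Jordan algebra\<close>

context finite_dim_jordan_algebra
begin

text \<open>The \<open>DIM('a) + 1\<close> powers \<open>jpow x 0, \<dots>, jpow x DIM('a)\<close> are linearly dependent.\<close>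
lemma annihilating_poly_exists: "\<exists>q. q \<noteq> 0 \<and> peval x q = 0"
proof (cases "inj_on (jpow x) {..DIM('a)}")
  case False
  then obtain i j where "i \<noteq> j" "jpow x i = jpow x j"
    unfolding inj_on_def by auto
  have "coeff (monom 1 i - monom (1::real) j) i \<noteq> 0"
    using \<open>i \<noteq> j\<close> by (auto simp: coeff_monom)
  moreover have "peval x (monom 1 i - monom 1 j) = 0"
    using \<open>jpow x i = jpow x j\<close> by (simp add: peval_diff peval_monom)
  ultimately show ?thesis
    by (metis coeff_0)
next
  case True
  let ?S = "jpow x ` {..DIM('a)}"
  have "card ?S = Suc DIM('a)"
    using True by (simp add: card_image)
  then have "\<not> independent ?S"
    using independent_bound[of ?S] by auto
  then obtain T u where T: "finite T" "T \<subseteq> ?S" "(\<Sum>v\<in>T. u v *\<^sub>R v) = 0"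
    and "\<exists>v\<in>T. u v \<noteq> 0"
    unfolding dependent_explicit by auto
  then obtain i where i: "i \<le> DIM('a)" "jpow x i \<in> T" "u (jpow x i) \<noteq> 0"
    by blast
  define I where "I = {i. i \<le> DIM('a) \<and> jpow x i \<in> T}"
  let ?q = "\<Sum>i\<in>I. monom (u (jpow x i)) i"
  have "finite I"
    by (simp add: I_def)
  then have "coeff ?q i \<noteq> 0"
    using i by (simp add: coeff_sum coeff_monom I_def)
  moreover have "peval x ?q = 0"
  proof -
    have "T = jpow x ` I"
      using T(2) by (auto simp: I_def)
    moreover have "inj_on (jpow x) I"
      by (rule inj_on_subset[OF True]) (auto simp: I_def)
    ultimately show ?thesis
      using T(3) by (simp add: peval_sum peval_monom sum.reindex)
  qed
  ultimately show ?thesis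
    by (metis coeff_0)
qed

lemma minimal_annihilating_poly_exists:
  obtains m where "m \<noteq> 0" "peval x m = 0"
    "\<And>r. r \<noteq> 0 \<Longrightarrow> degree r < degree m \<Longrightarrow> peval x r \<noteq> 0"
proof -
  define P where "P d \<longleftrightarrow> (\<exists>q. q \<noteq> 0 \<and> peval x q = 0 \<and> degree q = d)" for d
  have "\<exists>d. P d"
    using annihilating_poly_exists[of x] by (auto simp: P_def)
  then obtain d where "P d" and least: "\<And>d'. d' < d \<Longrightarrow> \<not> P d'"
    using exists_least_iff[of P] by blast
  then obtain m where "m \<noteq> 0" "peval x m = 0" "degree m = d"
    by (auto simp: P_def)
  moreover have "peval x r \<noteq> 0" if "r \<noteq> 0" "degree r < d" for r
    using least[OF that(2)] that(1) by (auto simp: P_def)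
  ultimately show ?thesis
    using that by blast
qed

end

locale formally_real_jordan_algebra = finite_dim_jordan_algebra +
  assumes formally_real: "formally_real p"
begin

lemma square_eq_0_imp:
  assumes "x \<odot> x = 0"
  shows "x = 0"
proof -
  have "sum_list (map (\<lambda>a. a \<odot> a) [x]) = 0"
    using assms by simp
  then have "\<forall>a\<in>set [x]. a = 0"
    using formally_real unfolding formally_real_def by blast
  then show ?thesis
    by simp
qed

lemma sum_squares_eq_0_imp:
  assumes "x \<odot> x + y \<odot> y = 0"
  shows "y = 0"
proof -
  have "sum_list (map (\<lambda>a. a \<odot> a) [x, y]) = 0"
    using assms by simp
  then have "\<forall>a\<in>set [x, y]. a = 0"
    using formally_real unfolding formally_real_def by blast
  then show ?thesis
    by simp
qed

context
  fixes x m
  assumes m_nonzero: "m \<noteq> 0" and m_annihilates: "peval x m = 0"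
    and m_minimal: "\<And>r. r \<noteq> 0 \<Longrightarrow> degree r < degree m \<Longrightarrow> peval x r \<noteq> 0"
begin

text \<open>If \<open>(X - c)\<^sup>2 k = m\<close> then \<open>((X - c) k)\<^sup>2 = m k\<close> annihilates \<open>x\<close>; by formal reality so does
  \<open>(X - c) k\<close>, contradicting minimality.\<close>
lemma minimal_poly_no_double_root: "\<not> [:-c, 1:] * [:-c, 1:] dvd m"
proof
  assume "[:-c, 1:] * [:-c, 1:] dvd m"
  then obtain k where k: "m = [:-c, 1:] * [:-c, 1:] * k"
    by (elim dvdE)
  define h where "h = [:-c, 1:] * k"
  have m: "m = [:-c, 1:] * h"
    by (simp only: k h_def mult.assoc)
  then have "h \<noteq> 0"
    using m_nonzero by auto
  moreover have "degree m = degree [:-c, 1:] + degree h"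
    unfolding m using \<open>h \<noteq> 0\<close> by (intro degree_mult_eq) simp_all
  then have "degree h < degree m"
    by simp
  moreover have "h * h = m * k"
    by (simp only: k h_def ac_simps)
  then have "peval x h \<odot> peval x h = peval x m \<odot> peval x k"
    by (simp only: peval_mult[symmetric])
  then have "peval x h \<odot> peval x h = 0"
    by (simp add: m_annihilates)
  then have "peval x h = 0"
    by (rule square_eq_0_imp)
  ultimately show False
    using m_minimal by blast
qed

text \<open>If \<open>m = ((X - Re z)\<^sup>2 + (Im z)\<^sup>2) q\<close>, then the sum of squares of \<open>(X - Re z) q\<close> and
  \<open>Im z \<cdot> q\<close> is \<open>m q\<close>; by formal reality \<open>q\<close> annihilates \<open>x\<close>, contradicting minimality.\<close>
lemma minimal_poly_roots_real:
  assumes "poly (map_poly of_real m) z = 0"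
  shows "Im z = 0"
proof (rule ccontr)
  assume nonreal: "Im z \<noteq> 0"
  define X B where "X = [:- Re z, 1:]" and "B = [:Im z:]"
  define g where "g = [:Re z * Re z + Im z * Im z, - 2 * Re z, 1:]"
  obtain q where m: "m = g * q"
    using nonreal_root_quadratic_dvd[OF assms nonreal] by (auto simp: g_def elim: dvdE)
  have "X * X + B * B = g"
    by (simp add: X_def B_def g_def algebra_simps)
  moreover have "(X * q) * (X * q) + (B * q) * (B * q) = (X * X + B * B) * q * q"
    by (simp add: algebra_simps)
  ultimately have "(X * q) * (X * q) + (B * q) * (B * q) = m * q"
    by (simp only: m)
  then have "peval x (X * q) \<odot> peval x (X * q) + peval x (B * q) \<odot> peval x (B * q)
      = peval x m \<odot> peval x q"
    by (simp only: peval_mult[symmetric] peval_add[symmetric])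
  then have "peval x (X * q) \<odot> peval x (X * q) + peval x (B * q) \<odot> peval x (B * q) = 0"
    by (simp add: m_annihilates)
  then have "peval x (B * q) = 0"
    by (rule sum_squares_eq_0_imp)
  then have "peval x q = 0"
    using nonreal by (simp add: B_def peval_smult)
  moreover have "q \<noteq> 0"
    using m_nonzero m by auto
  moreover have "degree m = degree g + degree q"
    unfolding m using \<open>q \<noteq> 0\<close> by (intro degree_mult_eq) (simp_all add: g_def)
  then have "degree q < degree m"
    by (simp add: g_def)
  ultimately show False
    using m_minimal by blast
qed

lemma prod_roots_annihilates: "peval x (\<Prod>c\<in>{c. poly m c = 0}. [:-c, 1:]) = 0"
proof -
  define L where "L = {c. poly m c = 0}"
  have "finite L"
    unfolding L_def using m_nonzero by (rule poly_roots_finite)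
  then have "(\<Prod>c\<in>L. [:-c, 1:]) dvd m"
    by (rule prod_linear_factors_dvd) (simp add: L_def)
  then obtain r where r: "m = (\<Prod>c\<in>L. [:-c, 1:]) * r"
    by (elim dvdE)
  have "degree r = 0"
  proof (rule ccontr)
    assume "degree r \<noteq> 0"
    then have "\<not> constant (poly (map_poly (of_real :: real \<Rightarrow> complex) r))"
      by (simp add: constant_degree degree_map_poly)
    then obtain z :: complex where z: "poly (map_poly of_real r) z = 0"
      using fundamental_theorem_of_algebra by blast
    then have "poly (map_poly of_real m) z = 0"
      by (simp add: r map_poly_of_real_mult)
    then have "Im z = 0"
      by (rule minimal_poly_roots_real)
    then obtain t where "z = of_real t"
      by (intro that[of "Re z"]) (simp add: complex_eq_iff)
    then have "poly r t = 0"
      using z poly_map_poly_of_real[of r t] by simp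
    then have "[:-t, 1:] dvd r" and "poly m t = 0"
      by (simp_all add: poly_eq_0_iff_dvd r)
    then have "[:-t, 1:] dvd r" and "t \<in> L"
      by (simp_all add: L_def)
    then have "[:-t, 1:] * [:-t, 1:] dvd m"
      unfolding r using \<open>finite L\<close> by (intro mult_dvd_mono dvd_prod_eqI) auto
    then show False
      using minimal_poly_no_double_root by blast
  qed
  then obtain c where "r = [:c:]"
    by (metis degree_eq_zeroE)
  then have "m = smult c (\<Prod>c\<in>L. [:-c, 1:])" and "c \<noteq> 0"
    using r m_nonzero by auto
  then show ?thesis
    unfolding L_def[symmetric] using m_annihilates by (simp add: peval_smult)
qed

lemma peval_eq_0_if_vanishes_on_roots:
  assumes "\<And>c. poly m c = 0 \<Longrightarrow> poly q c = 0"
  shows "peval x q = 0"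
proof -
  have "(\<Prod>c\<in>{c. poly m c = 0}. [:-c, 1:]) dvd q"
    using m_nonzero assms by (intro prod_linear_factors_dvd poly_roots_finite) auto
  then obtain k where "q = (\<Prod>c\<in>{c. poly m c = 0}. [:-c, 1:]) * k"
    by (elim dvdE)
  then show ?thesis
    by (simp add: peval_mult prod_roots_annihilates)
qed

end

text \<open>The idempotents are the Lagrange basis polynomials of the roots of the minimal polynomial
  evaluated at \<open>x\<close>; identities between polynomials that agree on these roots hold at \<open>x\<close>.\<close>
lemma spectral_decomposition:
  obtains L f where "finite L" "\<And>c. c \<in> L \<Longrightarrow> f c \<odot> f c = f c"
    "x = (\<Sum>c\<in>L. c *\<^sub>R f c)" "x \<odot> x = (\<Sum>c\<in>L. (c * c) *\<^sub>R f c)"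
proof -
  obtain m where m: "m \<noteq> 0" "peval x m = 0"
    "\<And>r. r \<noteq> 0 \<Longrightarrow> degree r < degree m \<Longrightarrow> peval x r \<noteq> 0"
    by (rule minimal_annihilating_poly_exists[of x]) blast
  define L where "L = {c. poly m c = 0}"
  define f where "f c = peval x (lagrange_basis L c)" for c
  have "finite L"
    unfolding L_def using m(1) by (rule poly_roots_finite)
  have vanish: "peval x q = 0" if "\<And>t. t \<in> L \<Longrightarrow> poly q t = 0" for q
    using peval_eq_0_if_vanishes_on_roots[OF m] that by (simp add: L_def)
  show ?thesis
  proof (rule that[OF \<open>finite L\<close>])
    fix c
    assume "c \<in> L"
    have "peval x (lagrange_basis L c * lagrange_basis L c - lagrange_basis L c) = 0"
      by (rule vanish) (simp add: poly_lagrange_basis[OF \<open>finite L\<close> \<open>c \<in> L\<close>])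
    then show "f c \<odot> f c = f c"
      by (simp add: f_def peval_diff peval_mult)
  next
    have "peval x ([:0, 1:] - (\<Sum>c\<in>L. smult c (lagrange_basis L c))) = 0"
      by (rule vanish) (simp add: poly_sum sum_lagrange_basis[OF \<open>finite L\<close>, where g = "\<lambda>c. c"])
    then show "x = (\<Sum>c\<in>L. c *\<^sub>R f c)"
      by (simp add: f_def peval_diff peval_X peval_sum peval_smult)
  next
    have "peval x ([:0, 1:] * [:0, 1:] - (\<Sum>c\<in>L. smult (c * c) (lagrange_basis L c))) = 0"
      by (rule vanish)
        (simp add: poly_sum sum_lagrange_basis[OF \<open>finite L\<close>, where g = "\<lambda>c. c * c"])
    then have "peval x [:0, 1:] \<odot> peval x [:0, 1:]
        = peval x (\<Sum>c\<in>L. smult (c * c) (lagrange_basis L c))"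
      by (simp only: peval_diff peval_mult right_minus_eq)
    then show "x \<odot> x = (\<Sum>c\<in>L. (c * c) *\<^sub>R f c)"
      by (simp add: f_def peval_X peval_sum peval_smult)
  qed
qed

lemma tau_square_pos:
  assumes "x \<noteq> 0"
  shows "tau (x \<odot> x) > 0"
proof -
  obtain L f where "finite L" and idem: "\<And>c. c \<in> L \<Longrightarrow> f c \<odot> f c = f c"
    and x: "x = (\<Sum>c\<in>L. c *\<^sub>R f c)" and xx: "x \<odot> x = (\<Sum>c\<in>L. (c * c) *\<^sub>R f c)"
    by (rule spectral_decomposition[of x]) blast
  have "\<exists>c\<in>L. c *\<^sub>R f c \<noteq> 0"
  proof (rule ccontr)
    assume "\<not> (\<exists>c\<in>L. c *\<^sub>R f c \<noteq> 0)"
    then have "x = 0"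
      unfolding x by (intro sum.neutral) blast
    with assms show False
      by contradiction
  qed
  then obtain c where c: "c \<in> L" "c \<noteq> 0" "f c \<noteq> 0"
    by auto
  have "0 < tau (f c)"
    using tau_idempotent(2)[OF idem[OF c(1)] c(3)] .
  then have "0 < (c * c) * tau (f c)"
    using c(2) not_real_square_gt_zero by (blast intro: mult_pos_pos)
  also have "\<dots> \<le> (\<Sum>c\<in>L. (c * c) * tau (f c))"
    using \<open>finite L\<close> tau_idempotent(1)[OF idem] by (intro member_le_sum[OF c(1)]) simp_all
  also have "\<dots> = tau (x \<odot> x)"
    by (simp add: xx tau_sum tau_scale)
  finally show ?thesis .
qed

end

section \<open>2-local 1-automorphisms\<close>

lemma (in real_jordan_algebra) mult_preserving_if_square_preserving:
  assumes "linear f" and square: "\<And>x. f (x \<odot> x) = f x \<odot> f x"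
  shows "f (x \<odot> y) = f x \<odot> f y"
proof -
  have "f (x \<odot> x) + (f (x \<odot> y) + f (x \<odot> y)) + f (y \<odot> y) = f ((x + y) \<odot> (x + y))"
    by (simp add: linear_add[OF assms(1)] commute[of y x])
  also have "\<dots> = f (x + y) \<odot> f (x + y)"
    by (rule square)
  also have "\<dots> = f x \<odot> f x + (f x \<odot> f y + f x \<odot> f y) + f y \<odot> f y"
    by (simp add: linear_add[OF assms(1)] commute[of "f y" "f x"])
  finally have "f (x \<odot> y) - f x \<odot> f y + (f (x \<odot> y) - f x \<odot> f y) = 0"
    by (simp add: square commute[of y x] algebra_simps)
  then show ?thesis
    by simp
qed

lemma (in finite_dim_jordan_algebra) two_local_preserves_trace_form:
  assumes "two_local_1_automorphism p e \<Delta>"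
  shows "trace_form (\<Delta> u) (\<Delta> v) = trace_form u v"
proof -
  obtain s where "s \<odot> s = e" "\<Delta> u = U_op p s u" "\<Delta> v = U_op p s v"
    using assms unfolding two_local_1_automorphism_def symmetry_def by blast
  then show ?thesis
    by (simp add: trace_form_def U_op_mult[symmetric] tau_U_op)
qed

lemma (in unital_jordan_algebra) two_local_preserves_squares:
  assumes "two_local_1_automorphism p e \<Delta>"
  shows "\<Delta> (x \<odot> x) = \<Delta> x \<odot> \<Delta> x"
proof -
  obtain s where "s \<odot> s = e" "\<Delta> x = U_op p s x" "\<Delta> (x \<odot> x) = U_op p s (x \<odot> x)"
    using assms unfolding two_local_1_automorphism_def symmetry_def by blast
  then show ?thesis
    by (simp add: U_op_mult)
qed

context formally_real_jordan_algebra
begin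

lemma trace_form_self_eq_0_imp: "trace_form w w = 0 \<Longrightarrow> w = 0"
  using tau_square_pos[of w] unfolding trace_form_def by force

text \<open>The trace form is positive definite, and the trace form of the defect
  \<open>f (x + y) - f x - f y\<close> (resp. \<open>f (c x) - c f x\<close>) with itself only involves values of the
  form \<open>trace_form (f u) (f v)\<close>.\<close>
lemma linear_if_preserves_trace_form:
  assumes preserves: "\<And>u v. trace_form (f u) (f v) = trace_form u v"
  shows "linear f"
proof (rule linearI)
  fix x y
  have expand: "trace_form (a - b - c) (a - b - c) = trace_form a a + trace_form b b
      + trace_form c c - 2 * trace_form a b - 2 * trace_form a c + 2 * trace_form b c" for a b c
    by (simp add: trace_form_simps trace_form_commute[of b a] trace_form_commute[of c a]
        trace_form_commute[of c b] algebra_simps)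
  have "trace_form (f (x + y) - f x - f y) (f (x + y) - f x - f y) = 0"
    by (simp only: expand preserves) (simp add: trace_form_simps trace_form_commute[of y x])
  then have "f (x + y) - f x - f y = 0"
    by (rule trace_form_self_eq_0_imp)
  then show "f (x + y) = f x + f y"
    by (simp add: algebra_simps)
next
  fix c x
  have expand: "trace_form (a - c *\<^sub>R b) (a - c *\<^sub>R b)
      = trace_form a a - 2 * c * trace_form a b + c * c * trace_form b b" for a b
    by (simp add: trace_form_simps trace_form_commute[of b a] algebra_simps)
  have "trace_form (f (c *\<^sub>R x) - c *\<^sub>R f x) (f (c *\<^sub>R x) - c *\<^sub>R f x) = 0"
    by (simp only: expand preserves) (simp add: trace_form_simps)
  then have "f (c *\<^sub>R x) - c *\<^sub>R f x = 0"
    by (rule trace_form_self_eq_0_imp)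
  then show "f (c *\<^sub>R x) = c *\<^sub>R f x"
    by (simp add: algebra_simps)
qed

lemma inj_if_preserves_trace_form:
  assumes "linear f" and preserves: "\<And>u v. trace_form (f u) (f v) = trace_form u v"
  shows "inj f"
proof (rule linear_injective_0[OF assms(1), THEN iffD2], intro allI impI)
  fix x
  assume "f x = 0"
  then have "trace_form x x = 0"
    using preserves[of x x] by (simp add: trace_form_def tau_zero)
  then show "x = 0"
    by (rule trace_form_self_eq_0_imp)
qed

theorem two_local_1_automorphism_is_automorphism:
  assumes "two_local_1_automorphism p e \<Delta>"
  shows "jordan_automorphism p \<Delta>"
proof -
  have preserves: "trace_form (\<Delta> u) (\<Delta> v) = trace_form u v" for u v
    using assms by (rule two_local_preserves_trace_form)
  then have "linear \<Delta>"
    by (rule linear_if_preserves_trace_form)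
  moreover have "inj \<Delta>"
    using \<open>linear \<Delta>\<close> preserves by (rule inj_if_preserves_trace_form)
  moreover have "\<Delta> (x \<odot> y) = \<Delta> x \<odot> \<Delta> y" for x y
    using \<open>linear \<Delta>\<close> two_local_preserves_squares[OF assms] by (rule mult_preserving_if_square_preserving)
  ultimately show ?thesis
    unfolding jordan_automorphism_def bij_def using linear_inj_imp_surj by blast
qed

end

theorem theorem5p8:
  fixes p :: "'a::euclidean_space \<Rightarrow> 'a \<Rightarrow> 'a" and e :: 'a and \<Delta> :: "'a \<Rightarrow> 'a"
  assumes "jordan_algebra p"
    and "jordan_unit p e"
    and "formally_real p"
    and "simple_algebra p"
    and "exceptional p"
    and "two_local_1_automorphism p e \<Delta>"
  shows "jordan_automorphism p \<Delta>"
proof -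
  interpret formally_real_jordan_algebra p e
    by unfold_locales (fact assms)+
  show ?thesis
    using assms(6) by (rule two_local_1_automorphism_is_automorphism)
qed

end
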